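(* Let $X$ and $Y$ be Banach spaces and let $A: D(A)\subseteq X\to Y$ be a closed, (possibly nonlinear) injective map. Let $f\in\mathcal R(A)$ and let $u\in D(A)$ be the (unique) solution of $A(u)=f$. Let $\phi: D(\phi)\to[0,\infty)$ with $D(\phi)\subseteq D(A)$, $\phi(v)>0$ for $v\neq 0$, such that for every constant $c>0$ the set $\{v:\phi(v)\le c\}$ is compact in $X$, and such that $v_n\to v$ in $X$ implies $\phi(v)\le\liminf_{n\to\infty}\phi(v_n)$. Fix a constant $c>0$ with $\phi(u)\le c$. For $\delta>0$ and $f_\delta\in Y$ with $\|f_\delta-f\|\le\delta$, put $$S_\delta:=\{v:\ \|A(v)-f_\delta\|\le\delta,\ \phi(v)\le c\},\qquad F_\delta(v):=\|A(v)-f_\delta\|+\delta\,\phi(v),\qquad m(\delta):=\inf_{v\in S_\delta}F_\delta(v).$$ Let $(v_j)\subset S_\delta$ be a minimizing sequence with $F_\delta(v_j)\le 2m(\delta)$, converging in $X$ to some $v_\delta$, and define $R(\delta)f_\delta:=v_\delta$. Then $R(\delta)$ is a regularizer for the equation $A(u)=f$ in the following sense: there is a function $\eta(\delta)$ with $\eta(\delta)\to0$ as $\delta\to 0$ such that $$\sup_{v\in S_\delta}\|R(\delta)f_\delta-v\|\le\eta(\delta).$$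
   Context: $\mathcal R(A)$ denotes the range of $A$. A family of operators $R(\delta)$ is called a regularizer (in the new sense of the paper) if $\sup_{v\in S_\delta}\|R(\delta)f_\delta-v\|\le\eta(\delta)\to0$ as $\delta\to0$, where $S_\delta$ is the set of all $v$ in the a priori compact set $\{\phi\le c\}$ with $\|A(v)-f_\delta\|\le\delta$, and $f_\delta$ is any noisy datum with $\|f_\delta-f\|\le\delta$. *)

theory Defs
  imports "HOL-Analysis.Analysis"
begin

definition closed_operator :: "'x::real_normed_vector set \<Rightarrow> ('x \<Rightarrow> 'y::real_normed_vector) \<Rightarrow> bool" where
  "closed_operator DA A \<longleftrightarrow> closed {(x, A x) | x. x \<in> DA}"

definition S_delta :: "('x \<Rightarrow> 'y::real_normed_vector) \<Rightarrow> 'x set \<Rightarrow> ('x \<Rightarrow> real) \<Rightarrow> real \<Rightarrow> real \<Rightarrow> 'y \<Rightarrow> 'x set" where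
  "S_delta A Dphi phi c \<delta> f\<delta> = {v \<in> Dphi. norm (A v - f\<delta>) \<le> \<delta> \<and> phi v \<le> c}"

definition F_delta :: "('x \<Rightarrow> 'y::real_normed_vector) \<Rightarrow> ('x \<Rightarrow> real) \<Rightarrow> real \<Rightarrow> 'y \<Rightarrow> 'x \<Rightarrow> real" where
  "F_delta A phi \<delta> f\<delta> v = norm (A v - f\<delta>) + \<delta> * phi v"

definition m_delta :: "('x \<Rightarrow> 'y::real_normed_vector) \<Rightarrow> 'x set \<Rightarrow> ('x \<Rightarrow> real) \<Rightarrow> real \<Rightarrow> real \<Rightarrow> 'y \<Rightarrow> real" where
  "m_delta A Dphi phi c \<delta> f\<delta> = (INF v \<in> S_delta A Dphi phi c \<delta> f\<delta>. F_delta A phi \<delta> f\<delta> v)"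

end

theory Submission
  imports Defs
begin

text \<open>On the compact sublevel set \<open>K = {v \<in> Dphi. phi v \<le> c}\<close> a closed injective operator has a
  uniformly continuous inverse at \<open>f = A u\<close>: a sequence in \<open>K\<close> with residuals \<open>norm (A v - f) \<rightarrow> 0\<close>
  has a convergent subsequence whose limit, by closedness of the graph and injectivity, must be \<open>u\<close>.
  Hence the modulus \<open>\<omega>(t) = sup {norm (v - u) | v \<in> K, norm (A v - f) \<le> t}\<close> tends to \<open>0\<close>.
  Every \<open>v \<in> S_delta\<close> lies in \<open>K\<close> with residual at most \<open>2\<delta>\<close>, hence within \<open>\<omega>(2\<delta>)\<close> of \<open>u\<close>, and so
  does the limit \<open>v\<^sub>\<delta>\<close>; thus \<open>\<eta>(\<delta>) = 2 \<omega>(2\<delta>)\<close> works.\<close>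

lemma closed_operator_limit:
  assumes "closed_operator DA A" "\<And>n. xs n \<in> DA" "xs \<longlonglongrightarrow> x" "(\<lambda>n. A (xs n)) \<longlonglongrightarrow> y"
  shows "x \<in> DA" "A x = y"
proof -
  have "(x, y) \<in> {(x, A x) | x. x \<in> DA}"
  proof (rule closed_sequentially)
    show "closed {(x, A x) | x. x \<in> DA}"
      using assms(1) unfolding closed_operator_def .
    show "(xs n, A (xs n)) \<in> {(x, A x) | x. x \<in> DA}" for n
      using assms(2) by blast
    show "(\<lambda>n. (xs n, A (xs n))) \<longlonglongrightarrow> (x, y)"
      using assms(3,4) by (rule tendsto_Pair)
  qed
  then show "x \<in> DA" "A x = y" by auto
qed

lemma closed_operator_inverse_stable_on_compact:
  assumes closedA: "closed_operator DA A" and injA: "inj_on A DA"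
    and "compact K" "K \<subseteq> DA" "u \<in> DA" "e > 0"
  shows "\<exists>d>0. \<forall>v\<in>K. norm (A v - A u) \<le> d \<longrightarrow> norm (v - u) < e"
proof (rule ccontr)
  assume "\<not> ?thesis"
  then have "\<forall>n. \<exists>v\<in>K. norm (A v - A u) \<le> inverse (real (Suc n)) \<and> e \<le> norm (v - u)"
    by (meson not_less positive_imp_inverse_positive of_nat_0_less_iff zero_less_Suc)
  then obtain vs where vs: "\<And>n. vs n \<in> K" "\<And>n. norm (A (vs n) - A u) \<le> inverse (real (Suc n))"
    "\<And>n. e \<le> norm (vs n - u)" by metis
  obtain w r where "w \<in> K" "strict_mono r" and sub_lim: "(vs \<circ> r) \<longlonglongrightarrow> w"
    using \<open>compact K\<close> vs(1) unfolding compact_eq_seq_compact_metric seq_compact_def by metis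
  have "(\<lambda>n. A (vs n) - A u) \<longlonglongrightarrow> 0"
    using vs(2) by (intro Lim_null_comparison[OF _ LIMSEQ_inverse_real_of_nat]) auto
  then have "(\<lambda>n. A (vs n)) \<longlonglongrightarrow> A u"
    using Lim_null by blast
  then have "(\<lambda>n. A ((vs \<circ> r) n)) \<longlonglongrightarrow> A u"
    using LIMSEQ_subseq_LIMSEQ[OF _ \<open>strict_mono r\<close>] by (simp add: comp_def)
  then have "w \<in> DA" "A w = A u"
    using closed_operator_limit[OF closedA _ sub_lim] vs(1) \<open>K \<subseteq> DA\<close> by auto
  then have "w = u"
    using injA \<open>u \<in> DA\<close> by (auto dest: inj_onD)
  then have "(\<lambda>n. norm ((vs \<circ> r) n - u)) \<longlonglongrightarrow> 0"
    using tendsto_norm[OF tendsto_diff[OF sub_lim tendsto_const[of u]]] by simp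
  then have "e \<le> 0"
    by (rule LIMSEQ_le_const) (use vs(3) in auto)
  with \<open>e > 0\<close> show False by simp
qed

definition residual_modulus :: "('x::real_normed_vector \<Rightarrow> 'y::real_normed_vector) \<Rightarrow> 'x set \<Rightarrow> 'x \<Rightarrow> real \<Rightarrow> real"
  where "residual_modulus A K u t = (SUP v \<in> {v \<in> K. norm (A v - A u) \<le> t}. norm (v - u))"

lemma norm_diff_le_residual_modulus:
  assumes "bounded K" "v \<in> K" "norm (A v - A u) \<le> t"
  shows "norm (v - u) \<le> residual_modulus A K u t"
proof -
  obtain B where "\<forall>x\<in>K. norm x \<le> B"
    using \<open>bounded K\<close> unfolding bounded_iff by blast
  then have "\<forall>x\<in>K. norm (x - u) \<le> B + norm u"
    using norm_triangle_ineq4 by (smt (verit))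
  then have "bdd_above ((\<lambda>v. norm (v - u)) ` {v \<in> K. norm (A v - A u) \<le> t})"
    by (auto intro: bdd_aboveI2)
  then show ?thesis
    unfolding residual_modulus_def using assms(2,3) by (auto intro: cSUP_upper)
qed

lemma residual_modulus_tendsto_0:
  assumes "closed_operator DA A" "inj_on A DA" "compact K" "K \<subseteq> DA" "u \<in> K"
  shows "(residual_modulus A K u \<longlongrightarrow> 0) (at_right 0)"
proof (rule tendstoI)
  fix e :: real
  assume "e > 0"
  obtain d where "d > 0" and d: "\<forall>v\<in>K. norm (A v - A u) \<le> d \<longrightarrow> norm (v - u) < e / 2"
    using closed_operator_inverse_stable_on_compact[OF assms(1-4), of u "e / 2"] assms(4,5) \<open>e > 0\<close>
    by auto
  have "dist (residual_modulus A K u t) 0 < e" if "0 < t" "t < d" for t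
  proof -
    have "0 \<le> residual_modulus A K u t"
      using norm_diff_le_residual_modulus[of K u A u t] assms(3,5) \<open>0 < t\<close> compact_imp_bounded
      by force
    moreover have "residual_modulus A K u t \<le> e / 2"
      unfolding residual_modulus_def
      using d \<open>t < d\<close> \<open>0 < t\<close> assms(5) by (intro cSUP_least) force+
    ultimately show ?thesis using \<open>e > 0\<close> by simp
  qed
  then show "\<forall>\<^sub>F t in at_right 0. dist (residual_modulus A K u t) 0 < e"
    unfolding eventually_at_right_field using \<open>d > 0\<close> by blast
qed

lemma filterlim_at_right_0_double: "filterlim (\<lambda>t::real. 2 * t) (at_right 0) (at_right 0)"
  unfolding filterlim_at by (auto intro!: tendsto_eq_intros eventually_mono[OF eventually_at_right_less])

lemma S_delta_residual:
  assumes "v \<in> S_delta A Dphi phi c \<delta> f\<delta>" "norm (f\<delta> - f) \<le> \<delta>"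
  shows "v \<in> {v \<in> Dphi. phi v \<le> c}" "norm (A v - f) \<le> 2 * \<delta>"
proof -
  show "v \<in> {v \<in> Dphi. phi v \<le> c}"
    using assms(1) unfolding S_delta_def by auto
  have "norm (A v - f) \<le> norm (A v - f\<delta>) + norm (f\<delta> - f)"
    using norm_triangle_ineq[of "A v - f\<delta>" "f\<delta> - f"] by simp
  then show "norm (A v - f) \<le> 2 * \<delta>"
    using assms unfolding S_delta_def by auto
qed

lemma SUP_norm_diff_limit_le:
  fixes vs :: "nat \<Rightarrow> 'a::real_normed_vector"
  assumes "\<forall>j. vs j \<in> S" "vs \<longlonglongrightarrow> w" "\<forall>v\<in>S. norm (v - u) \<le> r"
  shows "(SUP v \<in> S. norm (w - v)) \<le> 2 * r"
proof (rule cSUP_least)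
  show "S \<noteq> {}"
    using assms(1) by blast
  have "(\<lambda>j. norm (vs j - u)) \<longlonglongrightarrow> norm (w - u)"
    using assms(2) by (intro tendsto_intros)
  then have "norm (w - u) \<le> r"
    using assms(1,3) by (intro LIMSEQ_le_const2) auto
  then show "norm (w - v) \<le> 2 * r" if "v \<in> S" for v
    using assms(3) that norm_triangle_ineq[of "w - u" "u - v"] by (auto simp: norm_minus_commute)
qed

theorem mainTheorem1:
  fixes A :: "'x::banach \<Rightarrow> 'y::banach" and DA :: "'x set"
    and phi :: "'x \<Rightarrow> real" and Dphi :: "'x set"
    and f :: 'y and u :: 'x and c :: real
  assumes closedA: "closed_operator DA A"
    and injA: "inj_on A DA"
    and f_range: "f \<in> A ` DA"
    and u_dom: "u \<in> DA" and u_sol: "A u = f"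
    and Dphi_sub: "Dphi \<subseteq> DA"
    and phi_nonneg: "\<forall>v\<in>Dphi. phi v \<ge> 0"
    and phi_pos: "\<forall>v\<in>Dphi. v \<noteq> 0 \<longrightarrow> phi v > 0"
    and phi_compact: "\<forall>c'>0. compact {v \<in> Dphi. phi v \<le> c'}"
    and phi_lsc: "\<forall>vs v. (\<forall>n. vs n \<in> Dphi) \<longrightarrow> v \<in> Dphi \<longrightarrow> vs \<longlonglongrightarrow> v \<longrightarrow>
                    ereal (phi v) \<le> liminf (\<lambda>n. ereal (phi (vs n)))"
    and c_pos: "c > 0"
    and u_phi: "u \<in> Dphi" "phi u \<le> c"
  shows "\<exists>\<eta> :: real \<Rightarrow> real. (\<eta> \<longlongrightarrow> 0) (at_right 0) \<and>
     (\<forall>\<delta> > 0. \<forall>f\<delta> :: 'y. norm (f\<delta> - f) \<le> \<delta> \<longrightarrow>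
        (\<forall>(vs :: nat \<Rightarrow> 'x) v\<delta>.
            (\<forall>j. vs j \<in> S_delta A Dphi phi c \<delta> f\<delta>)
          \<longrightarrow> (\<lambda>j. F_delta A phi \<delta> f\<delta> (vs j)) \<longlonglongrightarrow> m_delta A Dphi phi c \<delta> f\<delta>
          \<longrightarrow> (\<forall>j. F_delta A phi \<delta> f\<delta> (vs j) \<le> 2 * m_delta A Dphi phi c \<delta> f\<delta>)
          \<longrightarrow> vs \<longlonglongrightarrow> v\<delta>
          \<longrightarrow> (SUP v \<in> S_delta A Dphi phi c \<delta> f\<delta>. norm (v\<delta> - v)) \<le> \<eta> \<delta>))"
proof -
  define K where "K = {v \<in> Dphi. phi v \<le> c}"
  have "compact K"
    using phi_compact c_pos unfolding K_def by blast
  moreover have "K \<subseteq> DA" "u \<in> K"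
    using Dphi_sub u_phi unfolding K_def by auto
  ultimately have K: "compact K" "bounded K" "K \<subseteq> DA" "u \<in> K"
    using compact_imp_bounded by auto
  define \<omega> where "\<omega> = residual_modulus A K u"
  have near_u: "norm (v - u) \<le> \<omega> (2 * \<delta>)"
    if "v \<in> S_delta A Dphi phi c \<delta> f\<delta>" "norm (f\<delta> - f) \<le> \<delta>" for v \<delta> f\<delta>
  proof -
    have "v \<in> K" "norm (A v - A u) \<le> 2 * \<delta>"
      using S_delta_residual[OF that] u_sol unfolding K_def by auto
    then show ?thesis
      unfolding \<omega>_def by (rule norm_diff_le_residual_modulus[OF K(2)])
  qed
  have "((\<lambda>\<delta>. 2 * \<omega> (2 * \<delta>)) \<longlongrightarrow> 0) (at_right 0)"
    using tendsto_mult_right_zero[OF filterlim_compose[OF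
          residual_modulus_tendsto_0[OF closedA injA K(1,3,4)] filterlim_at_right_0_double]]
    unfolding \<omega>_def by simp
  moreover have "(SUP v \<in> S_delta A Dphi phi c \<delta> f\<delta>. norm (v\<delta> - v)) \<le> 2 * \<omega> (2 * \<delta>)"
    if "norm (f\<delta> - f) \<le> \<delta>" "\<forall>j. vs j \<in> S_delta A Dphi phi c \<delta> f\<delta>" "vs \<longlonglongrightarrow> v\<delta>"
    for \<delta> f\<delta> vs v\<delta>
    using SUP_norm_diff_limit_le[OF that(2,3)] near_u[OF _ that(1)] by blast
  ultimately show ?thesis by blast
qed

end
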